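(* For every positive integer $n$, with $P^r_n=\sum_{b\in Z_n^r}\prod_{s=1}^rC_{b_s}$, $$\sum_{\substack{1\le r\le n\\ r\text{ odd}}}P^r_n=nC_{n-1}\qquad\text{and}\qquad\sum_{\substack{1\le r\le n\\ r\text{ even}}}P^r_n=(n-1)C_{n-1}.$$
   Context: $C_m=\frac{1}{m+1}\binom{2m}{m}$ is the $m$-th Catalan number ($C_0=1$) and $Z_n^r=\{(b_1,\dots,b_r)\in\mathbb Z^r: b_s>0\text{ for all }s,\ \sum_{s=1}^rb_s=n\}$. *)

theory Defs
  imports Main
begin

definition catalan :: "nat \<Rightarrow> nat" where
  "catalan m = ((2*m) choose m) div (m + 1)"

definition compositions :: "nat \<Rightarrow> nat \<Rightarrow> int list set" where
  "compositions n r = {b. length b = r \<and> (\<forall>s<r. b ! s > 0) \<and> sum_list b = int n}"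

definition P :: "nat \<Rightarrow> nat \<Rightarrow> nat" where
  "P r n = (\<Sum>b\<in>compositions n r. \<Prod>s<r. catalan (nat (b ! s)))"

end

theory Submission
  imports Defs "HOL-Computational_Algebra.Formal_Power_Series"
begin

text \<open>
  Let \<open>C(x) = \<Sum>m. C\<^sub>m x\<^sup>m\<close> and \<open>D = C - 1\<close>. Splitting off the first part of a
  composition shows that \<open>P\<^sup>r\<^sub>n\<close> is the \<open>n\<close>-th coefficient of \<open>D\<^sup>r\<close>. The ratio recurrence
  \<open>(m + 2) C\<^sub>m\<^sub>+\<^sub>1 = 2 (2m + 1) C\<^sub>m\<close> is a linear differential equation for \<open>H = x C\<close>, from
  which the Catalan equation \<open>C = 1 + x C\<^sup>2\<close> follows. Hence \<open>1/(1 + D) = 1 - H\<close> and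
  \<open>1/(1 - D) = 1 + 2x H' - H\<close>, and since \<open>D\<^sup>r\<close> starts at \<open>x\<^sup>r\<close>, the truncated geometric
  series give \<open>\<Sum>\<^sub>r P\<^sup>r\<^sub>n = (2n - 1) C\<^sub>n\<^sub>-\<^sub>1\<close> and \<open>\<Sum>\<^sub>r (-1)\<^sup>r P\<^sup>r\<^sub>n = -C\<^sub>n\<^sub>-\<^sub>1\<close>.
  The odd and even parts are half their difference and half their sum.
\<close>

lemma compositions_0: "compositions n 0 = (if n = 0 then {[]} else {})"
  by (auto simp: compositions_def)

lemma compositions_Suc:
  "compositions n (Suc r) = (\<Union>k\<in>{1..n}. (\<lambda>b. int k # b) ` compositions (n - k) r)"
proof
  show "compositions n (Suc r) \<subseteq> (\<Union>k\<in>{1..n}. (\<lambda>b. int k # b) ` compositions (n - k) r)"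
  proof
    fix b assume b: "b \<in> compositions n (Suc r)"
    then obtain x t where bt: "b = x # t"
      unfolding compositions_def by (cases b) auto
    have t_pos: "\<forall>s<r. t ! s > 0"
      using b bt by (auto simp: compositions_def)
    have x_pos: "x > 0" and t_len: "length t = r" and sum_b: "x + sum_list t = int n"
      using b bt by (auto simp: compositions_def)
    have "sum_list t \<ge> 0"
      using t_pos t_len by (intro sum_list_nonneg) (auto simp: in_set_conv_nth intro: less_imp_le)
    then have "nat x \<in> {1..n}" and "t \<in> compositions (n - nat x) r"
      using x_pos t_len t_pos sum_b by (auto simp: compositions_def of_nat_diff)
    then show "b \<in> (\<Union>k\<in>{1..n}. (\<lambda>b. int k # b) ` compositions (n - k) r)"
      using x_pos bt by force
  qed
next
  show "(\<Union>k\<in>{1..n}. (\<lambda>b. int k # b) ` compositions (n - k) r) \<subseteq> compositions n (Suc r)"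
  proof clarify
    fix k t assume k: "k \<in> {1..n}" and t: "t \<in> compositions (n - k) r"
    have "(int k # t) ! s > 0" if "s < Suc r" for s
      using that t k by (cases s) (auto simp: compositions_def)
    then show "int k # t \<in> compositions n (Suc r)"
      using t k by (auto simp: compositions_def of_nat_diff)
  qed
qed

lemma finite_compositions: "finite (compositions n r)"
  by (induction r arbitrary: n) (simp_all add: compositions_0 compositions_Suc)

lemma P_0: "P 0 n = (if n = 0 then 1 else 0)"
  by (simp add: P_def compositions_0)

lemma P_Suc: "P (Suc r) n = (\<Sum>k=1..n. catalan k * P r (n - k))"
proof -
  have "P (Suc r) n = (\<Sum>k=1..n. \<Sum>b\<in>(\<lambda>b. int k # b) ` compositions (n - k) r.
                           \<Prod>s<Suc r. catalan (nat (b ! s)))"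
    unfolding P_def compositions_Suc
    by (rule sum.UNION_disjoint) (auto simp: finite_compositions)
  also have "\<dots> = (\<Sum>k=1..n. \<Sum>b\<in>compositions (n - k) r. catalan k * (\<Prod>s<r. catalan (nat (b ! s))))"
    by (simp add: sum.reindex inj_on_def prod.lessThan_Suc_shift del: prod.lessThan_Suc)
  finally show ?thesis
    by (simp add: P_def sum_distrib_left)
qed

lemma Suc_dvd_central_binomial: "Suc m dvd ((2*m) choose m)"
proof -
  have "Suc (2*m) * ((2*m) choose m) = (Suc (2*m) choose Suc m) * Suc m"
    by (rule Suc_times_binomial_eq)
  then have "m * ((2*m) choose m) = Suc m * ((2*m) choose Suc m)"
    by (simp add: algebra_simps)
  then have "(2*m) choose m = Suc m * (((2*m) choose m) - ((2*m) choose Suc m))"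
    by (simp add: algebra_simps diff_mult_distrib2)
  then show ?thesis by (metis dvd_triv_left)
qed

lemma of_nat_catalan: "real (catalan m) = fact (2*m) / (fact m * fact (Suc m))"
  using Suc_dvd_central_binomial[of m]
  by (simp add: catalan_def real_of_nat_div binomial_fact field_simps)

lemma catalan_0 [simp]: "catalan 0 = 1"
  by (simp add: catalan_def)

lemma catalan_Suc: "real (m + 2) * real (catalan (Suc m)) = 2 * (2 * real m + 1) * real (catalan m)"
proof -
  have "fact (2 * Suc m) = (2 * real m + 2) * (2 * real m + 1) * (fact (2*m) :: real)"
    by (simp add: algebra_simps)
  moreover have "fact (Suc (Suc m)) = (real m + 2) * (fact (Suc m) :: real)"
    by simp
  ultimately show ?thesis
    unfolding of_nat_catalan by (simp add: divide_simps del: fact_Suc) (simp add: algebra_simps)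
qed

lemma fps_eq_0_if_linear_ode:
  fixes f :: "'a::field_char_0 fps"
  assumes ode: "fps_deriv f * (1 - fps_const c * fps_X) = fps_const d * f" and "fps_nth f 0 = 0"
  shows "f = 0"
proof (rule fps_ext)
  fix m show "fps_nth f m = fps_nth 0 m"
    unfolding fps_zero_nth
  proof (induction m)
    case (Suc m)
    have "fps_nth (fps_deriv f * (1 - fps_const c * fps_X)) m = fps_nth (fps_const d * f) m"
      using ode by simp
    then have "of_nat (Suc m) * fps_nth f (Suc m) = c * (of_nat m * fps_nth f m) + d * fps_nth f m"
      by (cases m) (simp_all add: algebra_simps)
    then show ?case using Suc.IH by (simp del: of_nat_Suc)
  qed (use assms in simp)
qed

definition catalan_fps :: "real fps" where
  "catalan_fps = Abs_fps (\<lambda>m. real (catalan m))"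

lemma catalan_fps_nth [simp]: "fps_nth catalan_fps m = real (catalan m)"
  by (simp add: catalan_fps_def)

lemma fps_X_catalan_fps_deriv: "fps_deriv (fps_X * catalan_fps) * (1 - 4 * fps_X) = 1 - 2 * (fps_X * catalan_fps)"
proof (rule fps_ext)
  fix n
  show "fps_nth (fps_deriv (fps_X * catalan_fps) * (1 - 4 * fps_X)) n = fps_nth (1 - 2 * (fps_X * catalan_fps)) n"
  proof (cases n)
    case (Suc m)
    then show ?thesis
      using catalan_Suc[of m] by (simp add: numeral_fps_const algebra_simps)
  qed (simp add: numeral_fps_const)
qed

lemma catalan_fps_eq: "catalan_fps = 1 + fps_X * catalan_fps ^ 2"
proof -
  define H where "H = fps_X * catalan_fps"
  \<comment> \<open>\<open>W = 0\<close> is the equation \<open>H\<^sup>2 = H - X\<close>; \<open>W\<close> satisfies a linear ODE and \<open>W(0) = 0\<close>.\<close>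
  define W where "W = (1 - 2 * H) ^ 2 - (1 - 4 * fps_X)"
  have "fps_deriv W * (1 - 4 * fps_X) = - 4 * (1 - 2 * H) * (fps_deriv H * (1 - 4 * fps_X)) + 4 * (1 - 4 * fps_X)"
    unfolding W_def by (simp add: power2_eq_square algebra_simps)
  also have "\<dots> = - 4 * W"
    unfolding H_def fps_X_catalan_fps_deriv by (simp add: W_def H_def power2_eq_square algebra_simps)
  finally have "fps_deriv W * (1 - fps_const 4 * fps_X) = fps_const (- 4) * W"
    by (simp add: numeral_fps_const)
  moreover have "fps_nth W 0 = 0"
    by (simp add: W_def H_def power2_eq_square)
  ultimately have "W = 0"
    by (rule fps_eq_0_if_linear_ode)
  then have "4 * (fps_X * (catalan_fps - (1 + fps_X * catalan_fps ^ 2))) = 0"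
    unfolding W_def H_def by (simp add: power2_eq_square algebra_simps)
  then show ?thesis by (simp add: numeral_neq_fps_zero)
qed

lemma fps_nth_power_catalan_fps_minus_1: "fps_nth ((catalan_fps - 1) ^ r) n = real (P r n)"
proof (induction r arbitrary: n)
  case 0
  then show ?case by (simp add: P_0)
next
  case (Suc r)
  have "fps_nth ((catalan_fps - 1) ^ Suc r) n
        = (\<Sum>i=0..n. fps_nth (catalan_fps - 1) i * fps_nth ((catalan_fps - 1) ^ r) (n - i))"
    by (simp add: fps_mult_nth)
  also have "\<dots> = (\<Sum>i=1..n. real (catalan i) * real (P r (n - i)))"
    by (simp add: sum.atLeast_Suc_atMost Suc.IH)
  finally show ?case
    by (simp add: P_Suc)
qed

lemma fps_nth_geometric_sum:
  fixes A E :: "'a::comm_ring_1 fps"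
  assumes inverse: "A * (1 - E) = 1" and "fps_nth E 0 = 0"
  shows "fps_nth (\<Sum>r\<le>n. E ^ r) n = fps_nth A n"
proof -
  define S where "S = (\<Sum>r\<le>n. E ^ r)"
  have "S = A * (1 - E) * S"
    using inverse by simp
  also have "\<dots> = A * (1 - E ^ Suc n)"
    using one_diff_power_eq[of E "Suc n"] by (simp add: S_def lessThan_Suc_atMost mult.assoc)
  also have "\<dots> = A - A * E ^ Suc n"
    by (simp add: right_diff_distrib)
  finally have "S = A - A * E ^ Suc n" .
  moreover have "fps_nth (A * E ^ Suc n) n = 0"
    using startsby_zero_power_prefix[OF \<open>fps_nth E 0 = 0\<close>, of "Suc n"]
    by (simp add: fps_mult_nth del: power_Suc)
  ultimately show ?thesis
    by (simp add: S_def)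
qed

lemma catalan_fps_minus_1: "catalan_fps - 1 = fps_X * catalan_fps ^ 2"
  using catalan_fps_eq by (metis add_diff_cancel_left')

lemma fps_X_catalan_fps_squared: "(fps_X * catalan_fps) ^ 2 = fps_X * catalan_fps - fps_X"
proof -
  have "(fps_X * catalan_fps) ^ 2 = fps_X * (fps_X * catalan_fps ^ 2)"
    by (simp add: power_mult_distrib power2_eq_square)
  also have "\<dots> = fps_X * catalan_fps - fps_X"
    by (simp add: catalan_fps_minus_1[symmetric] right_diff_distrib)
  finally show ?thesis .
qed

lemma catalan_fps_inverse: "catalan_fps * (1 - fps_X * catalan_fps) = 1"
proof -
  have "catalan_fps * (1 - fps_X * catalan_fps) = catalan_fps - fps_X * catalan_fps ^ 2"
    by (simp add: power2_eq_square algebra_simps)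
  then show ?thesis
    by (simp add: catalan_fps_minus_1[symmetric])
qed

lemma two_minus_catalan_fps_inverse:
  "(2 - catalan_fps) * (1 + 2 * fps_X * fps_deriv (fps_X * catalan_fps) - fps_X * catalan_fps) = 1"
proof -
  define H where "H = fps_X * catalan_fps"
  have square: "H ^ 2 = H - fps_X"
    unfolding H_def by (rule fps_X_catalan_fps_squared)
  then have "fps_deriv (H * H) = fps_deriv (H - fps_X)"
    by (simp add: power2_eq_square)
  then have deriv: "fps_deriv H * (1 - 2 * H) = 1"
    by (simp add: algebra_simps mult_2)
  \<comment> \<open>\<open>X (2 - C) = 2X - H = H (1 - 2H)\<close>, so \<open>X\<close> times the product is \<open>H (1 - H) = X\<close>.\<close>
  have "fps_X * ((2 - catalan_fps) * (1 + 2 * fps_X * fps_deriv H - H)) = fps_X * 1"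
    using square deriv H_def by algebra
  then show ?thesis
    unfolding H_def by simp
qed

lemma sum_P:
  assumes "n \<ge> 1"
  shows "(\<Sum>r\<le>n. real (P r n)) = (2 * real n - 1) * real (catalan (n - 1))"
proof -
  have "(\<Sum>r\<le>n. real (P r n)) = fps_nth (\<Sum>r\<le>n. (catalan_fps - 1) ^ r) n"
    unfolding fps_sum_nth fps_nth_power_catalan_fps_minus_1 ..
  also have "\<dots> = fps_nth (1 + 2 * fps_X * fps_deriv (fps_X * catalan_fps) - fps_X * catalan_fps) n"
    by (rule fps_nth_geometric_sum) (use two_minus_catalan_fps_inverse in \<open>simp_all add: mult.commute\<close>)
  also have "\<dots> = (2 * real n - 1) * real (catalan (n - 1))"
    using assms by (cases n) (auto simp: numeral_fps_const fps_deriv_nth algebra_simps)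
  finally show ?thesis .
qed

lemma sum_alternating_P:
  assumes "n \<ge> 1"
  shows "(\<Sum>r\<le>n. (-1) ^ r * real (P r n)) = - real (catalan (n - 1))"
proof -
  have "fps_nth (\<Sum>r\<le>n. (1 - catalan_fps) ^ r) n = fps_nth (1 - fps_X * catalan_fps) n"
    by (rule fps_nth_geometric_sum) (use catalan_fps_inverse in \<open>simp_all add: mult.commute\<close>)
  moreover have "(1 - catalan_fps) ^ r = fps_const ((-1) ^ r) * (catalan_fps - 1) ^ r" for r
    by (metis minus_diff_eq power_minus fps_const_neg fps_const_power fps_const_1_eq_1)
  ultimately show ?thesis
    using assms by (simp add: fps_sum_nth fps_nth_power_catalan_fps_minus_1)
qed

lemma sum_odd_parity:
  fixes f :: "nat \<Rightarrow> 'a::field_char_0"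
  shows "(\<Sum>r\<in>{r. 1 \<le> r \<and> r \<le> n \<and> odd r}. f r) = ((\<Sum>r\<le>n. f r) - (\<Sum>r\<le>n. (-1) ^ r * f r)) / 2"
proof -
  have "{r. 1 \<le> r \<and> r \<le> n \<and> odd r} = {r\<in>{..n}. odd r}"
    by (auto elim: oddE)
  then have "(\<Sum>r\<in>{r. 1 \<le> r \<and> r \<le> n \<and> odd r}. f r) = (\<Sum>r\<le>n. if odd r then f r else 0)"
    by (simp only: sum.inter_filter[OF finite_atMost])
  also have "\<dots> = (\<Sum>r\<le>n. (f r - (-1) ^ r * f r) / 2)"
    by (rule sum.cong) auto
  finally show ?thesis
    by (simp add: sum_divide_distrib[symmetric] sum_subtractf)
qed

lemma sum_even_parity:
  fixes f :: "nat \<Rightarrow> 'a::field_char_0"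
  assumes "f 0 = 0"
  shows "(\<Sum>r\<in>{r. 1 \<le> r \<and> r \<le> n \<and> even r}. f r) = ((\<Sum>r\<le>n. f r) + (\<Sum>r\<le>n. (-1) ^ r * f r)) / 2"
proof -
  have "{r. 1 \<le> r \<and> r \<le> n \<and> even r} = {r\<in>{..n}. even r \<and> r \<noteq> 0}"
    by auto
  then have "(\<Sum>r\<in>{r. 1 \<le> r \<and> r \<le> n \<and> even r}. f r) = (\<Sum>r\<le>n. if even r \<and> r \<noteq> 0 then f r else 0)"
    by (simp only: sum.inter_filter[OF finite_atMost])
  also have "\<dots> = (\<Sum>r\<le>n. (f r + (-1) ^ r * f r) / 2)"
    using assms by (intro sum.cong) auto
  finally show ?thesis
    by (simp add: sum_divide_distrib[symmetric] sum.distrib)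
qed

theorem lemma5p10:
  fixes n :: nat
  assumes "n \<ge> 1"
  shows "(\<Sum>r\<in>{r. 1 \<le> r \<and> r \<le> n \<and> odd r}. P r n) = n * catalan (n - 1)
       \<and> (\<Sum>r\<in>{r. 1 \<le> r \<and> r \<le> n \<and> even r}. P r n) = (n - 1) * catalan (n - 1)"
proof -
  have "real (\<Sum>r\<in>{r. 1 \<le> r \<and> r \<le> n \<and> odd r}. P r n)
        = ((\<Sum>r\<le>n. real (P r n)) - (\<Sum>r\<le>n. (-1) ^ r * real (P r n))) / 2"
    unfolding of_nat_sum by (rule sum_odd_parity)
  also have "\<dots> = real (n * catalan (n - 1))"
    unfolding sum_P[OF assms] sum_alternating_P[OF assms] by (simp add: algebra_simps)
  finally have odd: "(\<Sum>r\<in>{r. 1 \<le> r \<and> r \<le> n \<and> odd r}. P r n) = n * catalan (n - 1)"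
    by (simp only: of_nat_eq_iff)
  have "real (\<Sum>r\<in>{r. 1 \<le> r \<and> r \<le> n \<and> even r}. P r n)
        = ((\<Sum>r\<le>n. real (P r n)) + (\<Sum>r\<le>n. (-1) ^ r * real (P r n))) / 2"
    unfolding of_nat_sum by (rule sum_even_parity) (use assms in \<open>simp add: P_0\<close>)
  also have "\<dots> = real ((n - 1) * catalan (n - 1))"
    unfolding sum_P[OF assms] sum_alternating_P[OF assms] using assms by (simp add: of_nat_diff field_simps)
  finally have even: "(\<Sum>r\<in>{r. 1 \<le> r \<and> r \<le> n \<and> even r}. P r n) = (n - 1) * catalan (n - 1)"
    by (simp only: of_nat_eq_iff)
  from odd even show ?thesis ..
qed

end
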